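(* Consider the following model. A principal P and an agent A interact over two periods $t\in\{1,2\}$. States $\omega_t\in\{0,1\}$ satisfy $\Pr[\omega_1=1]=\mu_0\in(0,1)$ and $\Pr[\omega_2=\omega\mid\omega_1=\omega]=\rho\in(1/2,1)$. In each period A chooses $e_t\in\{0,1\}$; if $e_t=1$ he observes $\omega_t$, if $e_t=0$ he observes $\omega_t$ with probability $\pi\in(0,1)$ and nothing otherwise. A reports $r_t\in\{\varnothing,\omega_t\}$ if he observed $\omega_t$, else $r_t=\varnothing$. P chooses $x=\hat x(r_1,r_2)\in\{0,1\}$ at the end of period 2. Payoffs: P gets $\mathbb{1}[x=\omega_2]-k(e_1+e_2)$, A gets $x-c(e_1+e_2)$, $c,k>0$. A mechanism consists of $\sigma_1\in\{0,1\}$, $\sigma_2:\{\varnothing,0,1\}\to\{0,1\}$, $\hat x:\{\varnothing,0,1\}^2\to\{0,1\}$, to which P commits; A best-responds, following the recommendation and disclosing when indifferent. A mechanism is IC if at every history occurring with positive probability A optimally obeys the testing recommendation and discloses every observed result, and $\hat x(r_1,\varnothing)=0$ whenever $\sigma_2(r_1)=1$. Let $\kappa=k/(1-\pi)$, $\gamma=c/(1-\pi)$, $\mu_2(\varnothing)=\rho\mu_0+(1-\rho)(1-\mu_0)$, $\bar\kappa=(1-\rho)/(1-\pi)$, $\bar\gamma=(1-\rho)[\mu_0-(1-\mu_0)(1-\pi)]/\pi$, and assume $\kappa\in(1-\rho,\min\{\mu_2(\varnothing),1-\mu_2(\varnothing)\}]$ and $\gamma\in(1-\rho,\mu_2(\varnothing)]$.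 Then a mechanism maximizing P's expected payoff among IC mechanisms has $\sigma_1=0$ and: (i) if $\kappa>\bar\kappa$ and $\gamma\ge\bar\gamma$: $\sigma_2(r_1)=\mathbb{1}[r_1=\varnothing]$ and $\hat x(r_1,r_2)=\mathbb{1}[r_1=1]+\mathbb{1}[r_1\neq1]\mathbb{1}[r_2=1]$; (ii) if $\kappa\in(1-\rho,\bar\kappa)$ or $\gamma<\bar\gamma$: $\sigma_2(0)=0$, $\sigma_2(1)=1$, $\sigma_2(\varnothing)=1$, and $\hat x(r_1,r_2)=\mathbb{1}[r_2=1]$; (iii) if $\kappa=\bar\kappa$, either of the two previous mechanisms is optimal.
   Context: P's expected payoff is the expected value of $\mathbb{1}[\hat x(r_1,r_2)=\omega_2]-k(e_1+e_2)$ under the behavior induced by the mechanism. Every mechanism's outcomes can be replicated by an IC mechanism, so optimality among IC mechanisms is optimality among all mechanisms. *)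

theory Defs
  imports Complex_Main
begin

text \<open>States and the decision are encoded as bool
  (True = 1, False = 0).  Signals / reports are encoded as bool option:
  None = nothing observed / empty report (the symbol varnothing),
  Some w = the state w was observed / reported.\<close>

definition prior :: "real \<Rightarrow> real \<Rightarrow> bool \<Rightarrow> bool \<Rightarrow> real" where
  "prior \<mu>0 \<rho> \<omega>1 \<omega>2 =
     (if \<omega>1 then \<mu>0 else 1 - \<mu>0) * (if \<omega>2 = \<omega>1 then \<rho> else 1 - \<rho>)"

definition obs :: "real \<Rightarrow> bool \<Rightarrow> bool \<Rightarrow> bool option \<Rightarrow> real" where
  "obs \<pi> e \<omega> s =
     (if e then (if s = Some \<omega> then 1 else 0)
      else (if s = Some \<omega> then \<pi> else if s = None then 1 - \<pi> else 0))"

definition reach1 :: "real \<Rightarrow> real \<Rightarrow> real \<Rightarrow> bool \<Rightarrow> bool option \<Rightarrow> real" where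
  "reach1 \<mu>0 \<rho> \<pi> e1 s1 =
     (\<Sum>\<omega>1\<in>UNIV. \<Sum>\<omega>2\<in>UNIV. prior \<mu>0 \<rho> \<omega>1 \<omega>2 * obs \<pi> e1 \<omega>1 s1)"

definition natw :: "real \<Rightarrow> real \<Rightarrow> real \<Rightarrow> bool \<Rightarrow> bool option \<Rightarrow> bool \<Rightarrow> bool option \<Rightarrow> real" where
  "natw \<mu>0 \<rho> \<pi> e1 s1 e2 s2 =
     (\<Sum>\<omega>1\<in>UNIV. \<Sum>\<omega>2\<in>UNIV. prior \<mu>0 \<rho> \<omega>1 \<omega>2 * obs \<pi> e1 \<omega>1 s1 * obs \<pi> e2 \<omega>2 s2)"

definition agent_u :: "real \<Rightarrow> (bool option \<Rightarrow> bool option \<Rightarrow> bool) \<Rightarrow>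
    bool option \<Rightarrow> bool option \<Rightarrow> bool \<Rightarrow> bool \<Rightarrow> real" where
  "agent_u c xh r1 r2 e1 e2 = of_bool (xh r1 r2) - c * (of_bool e1 + of_bool e2)"

text \<open>Agent (pure) strategies, defined at all of the agent's histories:
  E1 :: bool                                   (period-1 effort),
  R1 :: bool => signal => report               (period-1 report, given e1, s1),
  E2 :: bool => signal => report => bool       (period-2 effort, given e1, s1, r1),
  R2 :: bool => signal => report => bool => signal => report
                                               (period-2 report, given e1, s1, r1, e2, s2).\<close>

definition feasible_rep ::
  "(bool \<Rightarrow> bool option \<Rightarrow> bool option) \<Rightarrow>
   (bool \<Rightarrow> bool option \<Rightarrow> bool option \<Rightarrow> bool \<Rightarrow> bool option \<Rightarrow> bool option) \<Rightarrow> bool" where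
  "feasible_rep R1 R2 \<longleftrightarrow>
     (\<forall>e s. R1 e s = None \<or> R1 e s = s) \<and>
     (\<forall>e1 s1 r1 e2 s2. R2 e1 s1 r1 e2 s2 = None \<or> R2 e1 s1 r1 e2 s2 = s2)"

text \<open>Agent's (unnormalised) continuation values: expected payoff restricted to the
  event that the given history is reached (division by the positive probability of the
  history does not affect comparisons).\<close>

definition V2 where
  "V2 \<mu>0 \<rho> \<pi> c xh e1 s1 r1 E2 R2 =
     (\<Sum>s2\<in>UNIV. natw \<mu>0 \<rho> \<pi> e1 s1 (E2 e1 s1 r1) s2 *
        agent_u c xh r1 (R2 e1 s1 r1 (E2 e1 s1 r1) s2) e1 (E2 e1 s1 r1))"

definition V1 where
  "V1 \<mu>0 \<rho> \<pi> c xh e1 s1 R1 E2 R2 = V2 \<mu>0 \<rho> \<pi> c xh e1 s1 (R1 e1 s1) E2 R2"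

definition V0 where
  "V0 \<mu>0 \<rho> \<pi> c xh E1 R1 E2 R2 = (\<Sum>s1\<in>UNIV. V1 \<mu>0 \<rho> \<pi> c xh E1 s1 R1 E2 R2)"

definition IC :: "real \<Rightarrow> real \<Rightarrow> real \<Rightarrow> real \<Rightarrow> bool \<Rightarrow> (bool option \<Rightarrow> bool) \<Rightarrow>
    (bool option \<Rightarrow> bool option \<Rightarrow> bool) \<Rightarrow> bool" where
  "IC \<mu>0 \<rho> \<pi> c \<sigma>1 \<sigma>2 xh \<longleftrightarrow>
     (let oR1 = (\<lambda>e s. s); oE2 = (\<lambda>e s r. \<sigma>2 r); oR2 = (\<lambda>e1 s1 r1 e2 s2. s2) in
     (\<forall>r1. \<sigma>2 r1 \<longrightarrow> \<not> xh r1 None) \<and>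
     (\<forall>E1 R1 E2 R2. feasible_rep R1 R2 \<longrightarrow>
        V0 \<mu>0 \<rho> \<pi> c xh E1 R1 E2 R2 \<le> V0 \<mu>0 \<rho> \<pi> c xh \<sigma>1 oR1 oE2 oR2) \<and>
     (\<forall>s1. reach1 \<mu>0 \<rho> \<pi> \<sigma>1 s1 > 0 \<longrightarrow> (\<forall>R1 E2 R2. feasible_rep R1 R2 \<longrightarrow>
        V1 \<mu>0 \<rho> \<pi> c xh \<sigma>1 s1 R1 E2 R2 \<le> V1 \<mu>0 \<rho> \<pi> c xh \<sigma>1 s1 oR1 oE2 oR2)) \<and>
     (\<forall>s1. reach1 \<mu>0 \<rho> \<pi> \<sigma>1 s1 > 0 \<longrightarrow> (\<forall>E2 R2. feasible_rep oR1 R2 \<longrightarrow>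
        V2 \<mu>0 \<rho> \<pi> c xh \<sigma>1 s1 s1 E2 R2 \<le> V2 \<mu>0 \<rho> \<pi> c xh \<sigma>1 s1 s1 oE2 oR2)) \<and>
     (\<forall>s1 s2. natw \<mu>0 \<rho> \<pi> \<sigma>1 s1 (\<sigma>2 s1) s2 > 0 \<longrightarrow> (\<forall>r2. (r2 = None \<or> r2 = s2) \<longrightarrow>
        agent_u c xh s1 r2 \<sigma>1 (\<sigma>2 s1) \<le> agent_u c xh s1 s2 \<sigma>1 (\<sigma>2 s1))))"

definition P_payoff :: "real \<Rightarrow> real \<Rightarrow> real \<Rightarrow> real \<Rightarrow> bool \<Rightarrow> (bool option \<Rightarrow> bool) \<Rightarrow>
    (bool option \<Rightarrow> bool option \<Rightarrow> bool) \<Rightarrow> real" where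
  "P_payoff \<mu>0 \<rho> \<pi> k \<sigma>1 \<sigma>2 xh =
     (\<Sum>\<omega>1\<in>UNIV. \<Sum>\<omega>2\<in>UNIV. \<Sum>s1\<in>UNIV. \<Sum>s2\<in>UNIV.
        prior \<mu>0 \<rho> \<omega>1 \<omega>2 * obs \<pi> \<sigma>1 \<omega>1 s1 * obs \<pi> (\<sigma>2 s1) \<omega>2 s2 *
        (of_bool (xh s1 s2 = \<omega>2) - k * (of_bool \<sigma>1 + of_bool (\<sigma>2 s1))))"

definition optimal_IC :: "real \<Rightarrow> real \<Rightarrow> real \<Rightarrow> real \<Rightarrow> real \<Rightarrow> bool \<Rightarrow> (bool option \<Rightarrow> bool) \<Rightarrow>
    (bool option \<Rightarrow> bool option \<Rightarrow> bool) \<Rightarrow> bool" where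
  "optimal_IC \<mu>0 \<rho> \<pi> c k \<sigma>1 \<sigma>2 xh \<longleftrightarrow>
     IC \<mu>0 \<rho> \<pi> c \<sigma>1 \<sigma>2 xh \<and>
     (\<forall>\<sigma>1' \<sigma>2' xh'. IC \<mu>0 \<rho> \<pi> c \<sigma>1' \<sigma>2' xh' \<longrightarrow>
        P_payoff \<mu>0 \<rho> \<pi> k \<sigma>1' \<sigma>2' xh' \<le> P_payoff \<mu>0 \<rho> \<pi> k \<sigma>1 \<sigma>2 xh)"

end

theory Submission
  imports Defs
begin

text \<open>Conditioning on the first-period signal splits the principal's problem into three one-period
  testing problems, at beliefs \<open>\<mu>2(\<emptyset>)\<close>, \<open>\<rho>\<close> and \<open>1 - \<rho>\<close> that \<open>\<omega>2 = 1\<close>. Given the bounds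
  on \<open>\<kappa>\<close>, the principal gets at most \<open>1 - k\<close> after an empty report and at most \<open>\<pi> + (1 - \<pi>) \<rho>\<close>
  after bad news. After good news he gets at most \<open>1 - k\<close>, or \<open>\<rho>\<close> if he approves without a
  test, since incentive compatibility then forces approval whatever the agent reports. A
  first-period test never beats mechanism (ii), so mechanisms (i) and (ii) are compared through
  \<open>\<rho>\<close> versus \<open>1 - k\<close>, that is, \<open>\<kappa>\<close> versus \<open>\<kappa>bar\<close>.

  Mechanism (i) is incentive compatible iff the agent does not prefer to test already in period 1,
  which is \<open>\<gamma>bar \<le> \<gamma>\<close>. When \<open>\<gamma> < \<gamma>bar\<close>, the same deviation shows that an incentive compatible
  mechanism approving good news without a test cannot screen after an empty report; it then earns
  at most \<open>\<mu>2(\<emptyset>)\<close> there, and mechanism (ii) does better.\<close>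

section \<open>Continuation values of the agent\<close>

lemma sum_UNIV_bool: "(\<Sum>b\<in>UNIV. f b) = f False + f True"
  for f :: "bool \<Rightarrow> 'a::comm_monoid_add"
  by (simp add: UNIV_bool)

lemma sum_UNIV_bool_option: "(\<Sum>s\<in>UNIV. f s) = f None + f (Some False) + f (Some True)"
  for f :: "bool option \<Rightarrow> 'a::comm_monoid_add"
  by (simp add: UNIV_option_conv UNIV_bool add.assoc)

abbreviation disclose1 :: "bool \<Rightarrow> bool option \<Rightarrow> bool option"
  where "disclose1 \<equiv> \<lambda>e s. s"

abbreviation obey2 :: "(bool option \<Rightarrow> bool) \<Rightarrow> bool \<Rightarrow> bool option \<Rightarrow> bool option \<Rightarrow> bool"
  where "obey2 \<sigma>2 \<equiv> \<lambda>e s r. \<sigma>2 r"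

abbreviation disclose2 :: "bool \<Rightarrow> bool option \<Rightarrow> bool option \<Rightarrow> bool \<Rightarrow> bool option \<Rightarrow> bool option"
  where "disclose2 \<equiv> \<lambda>e1 s1 r1 e2 s2. s2"

definition mu2_empty :: "real \<Rightarrow> real \<Rightarrow> real" where
  "mu2_empty \<mu> \<rho> = \<rho> * \<mu> + (1 - \<rho>) * (1 - \<mu>)"

text \<open>Period-2 payoffs under disclosure: \<open>p\<close> is the belief that \<open>\<omega>2 = 1\<close> and \<open>x\<close> maps the
  second report to the decision.\<close>

definition agent_value2 :: "real \<Rightarrow> real \<Rightarrow> real \<Rightarrow> bool \<Rightarrow> (bool option \<Rightarrow> bool) \<Rightarrow> real" where
  "agent_value2 p \<pi> c e x =
     (if e then p * of_bool (x (Some True)) + (1 - p) * of_bool (x (Some False)) - c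
      else (1 - \<pi>) * of_bool (x None)
        + \<pi> * (p * of_bool (x (Some True)) + (1 - p) * of_bool (x (Some False))))"

definition principal_value2 :: "real \<Rightarrow> real \<Rightarrow> real \<Rightarrow> bool \<Rightarrow> (bool option \<Rightarrow> bool) \<Rightarrow> real" where
  "principal_value2 p \<pi> k e x =
     (if e then p * of_bool (x (Some True)) + (1 - p) * of_bool (\<not> x (Some False)) - k
      else (1 - \<pi>) * (p * of_bool (x None) + (1 - p) * of_bool (\<not> x None))
        + \<pi> * (p * of_bool (x (Some True)) + (1 - p) * of_bool (\<not> x (Some False))))"

definition agent_value_at :: "real \<Rightarrow> real \<Rightarrow> real \<Rightarrow> real \<Rightarrow> (bool option \<Rightarrow> bool option \<Rightarrow> bool) \<Rightarrow>
    bool \<Rightarrow> bool option \<Rightarrow> bool option \<Rightarrow> bool \<Rightarrow> real" where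
  "agent_value_at \<mu> \<rho> \<pi> c xh e1 s1 r1 e2 =
     (\<Sum>s2\<in>UNIV. natw \<mu> \<rho> \<pi> e1 s1 e2 s2 * agent_u c xh r1 s2 e1 e2)"

lemma agent_value_at_eq:
  "agent_value_at \<mu> \<rho> \<pi> c xh False None r1 e2 = (1 - \<pi>) * agent_value2 (mu2_empty \<mu> \<rho>) \<pi> c e2 (xh r1)"
  "agent_value_at \<mu> \<rho> \<pi> c xh False (Some True) r1 e2 = \<pi> * \<mu> * agent_value2 \<rho> \<pi> c e2 (xh r1)"
  "agent_value_at \<mu> \<rho> \<pi> c xh False (Some False) r1 e2 =
     \<pi> * (1 - \<mu>) * agent_value2 (1 - \<rho>) \<pi> c e2 (xh r1)"
  "agent_value_at \<mu> \<rho> \<pi> c xh True None r1 e2 = 0"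
  "agent_value_at \<mu> \<rho> \<pi> c xh True (Some True) r1 e2 = \<mu> * (agent_value2 \<rho> \<pi> c e2 (xh r1) - c)"
  "agent_value_at \<mu> \<rho> \<pi> c xh True (Some False) r1 e2 =
     (1 - \<mu>) * (agent_value2 (1 - \<rho>) \<pi> c e2 (xh r1) - c)"
  unfolding agent_value_at_def agent_value2_def natw_def prior_def obs_def agent_u_def mu2_empty_def
  by (cases e2; simp add: sum_UNIV_bool sum_UNIV_bool_option algebra_simps)+

lemma agent_value2_approve_good: "agent_value2 p \<pi> c e (\<lambda>r. r = Some True) = (if e then p - c else \<pi> * p)"
  by (simp add: agent_value2_def)

lemma agent_value2_le_one:
  assumes "0 \<le> p" "p \<le> 1" "0 \<le> \<pi>" "\<pi> \<le> 1" "0 \<le> c"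
  shows "agent_value2 p \<pi> c e x \<le> 1"
proof -
  have bounds: "\<pi> * p \<le> \<pi>" "\<pi> * p \<le> p" "0 \<le> \<pi> * p"
    using assms by (auto simp: mult_left_le mult_left_le_one_le)
  show ?thesis unfolding agent_value2_def
    by (cases e; cases "x None"; cases "x (Some True)"; cases "x (Some False)";
        simp add: algebra_simps; use bounds assms in linarith)
qed

lemma V2_disclose2: "V2 \<mu> \<rho> \<pi> c xh e1 s1 r1 E2 disclose2 = agent_value_at \<mu> \<rho> \<pi> c xh e1 s1 r1 (E2 e1 s1 r1)"
  by (simp add: V2_def agent_value_at_def)

lemma V1_obedient:
  "V1 \<mu> \<rho> \<pi> c xh e1 s1 disclose1 (obey2 \<sigma>2) disclose2 = agent_value_at \<mu> \<rho> \<pi> c xh e1 s1 s1 (\<sigma>2 s1)"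
  by (simp add: V1_def V2_disclose2)

lemma V0_eq: "V0 \<mu> \<rho> \<pi> c xh E1 R1 E2 R2 =
   V1 \<mu> \<rho> \<pi> c xh E1 None R1 E2 R2 + V1 \<mu> \<rho> \<pi> c xh E1 (Some False) R1 E2 R2
   + V1 \<mu> \<rho> \<pi> c xh E1 (Some True) R1 E2 R2"
  by (simp add: V0_def sum_UNIV_bool_option)

lemma natw_nonneg:
  assumes "0 \<le> \<mu>" "\<mu> \<le> 1" "0 \<le> \<rho>" "\<rho> \<le> 1" "0 \<le> \<pi>" "\<pi> \<le> 1"
  shows "0 \<le> natw \<mu> \<rho> \<pi> e1 s1 e2 s2"
  unfolding natw_def prior_def obs_def using assms by (intro sum_nonneg) auto

lemma V2_le_agent_value_at:
  assumes "0 \<le> \<mu>" "\<mu> \<le> 1" "0 \<le> \<rho>" "\<rho> \<le> 1" "0 \<le> \<pi>" "\<pi> \<le> 1"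
    and disclosure_rewarded: "\<And>s2. xh r1 None \<Longrightarrow> xh r1 s2"
    and "feasible_rep R1 R2"
  shows "V2 \<mu> \<rho> \<pi> c xh e1 s1 r1 E2 R2 \<le> agent_value_at \<mu> \<rho> \<pi> c xh e1 s1 r1 (E2 e1 s1 r1)"
  unfolding V2_def agent_value_at_def
proof (rule sum_mono)
  fix s2
  let ?e2 = "E2 e1 s1 r1"
  have "R2 e1 s1 r1 ?e2 s2 = None \<or> R2 e1 s1 r1 ?e2 s2 = s2"
    using \<open>feasible_rep R1 R2\<close> by (simp add: feasible_rep_def)
  then have "agent_u c xh r1 (R2 e1 s1 r1 ?e2 s2) e1 ?e2 \<le> agent_u c xh r1 s2 e1 ?e2"
    using disclosure_rewarded by (auto simp: agent_u_def)
  then show "natw \<mu> \<rho> \<pi> e1 s1 ?e2 s2 * agent_u c xh r1 (R2 e1 s1 r1 ?e2 s2) e1 ?e2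
      \<le> natw \<mu> \<rho> \<pi> e1 s1 ?e2 s2 * agent_u c xh r1 s2 e1 ?e2"
    by (rule mult_left_mono[OF _ natw_nonneg[OF assms(1-6)]])
qed

lemma V1_le_agent_value_at:
  assumes "0 \<le> \<mu>" "\<mu> \<le> 1" "0 \<le> \<rho>" "\<rho> \<le> 1" "0 \<le> \<pi>" "\<pi> \<le> 1"
    and "\<And>r1 s2. xh r1 None \<Longrightarrow> xh r1 s2"
    and "feasible_rep R1 R2"
  shows "V1 \<mu> \<rho> \<pi> c xh e1 s1 R1 E2 R2
    \<le> agent_value_at \<mu> \<rho> \<pi> c xh e1 s1 (R1 e1 s1) (E2 e1 s1 (R1 e1 s1))"
  unfolding V1_def using assms by (rule V2_le_agent_value_at)

section \<open>Incentive compatibility\<close>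

lemma IC_no_approval_on_empty_test:
  assumes "IC \<mu> \<rho> \<pi> c \<sigma>1 \<sigma>2 xh" "\<sigma>2 r1"
  shows "\<not> xh r1 None"
proof -
  have "\<forall>r1. \<sigma>2 r1 \<longrightarrow> \<not> xh r1 None"
    using assms(1) unfolding IC_def Let_def by (rule conjunct1)
  with assms(2) show ?thesis by blast
qed

lemma IC_first_period:
  assumes "IC \<mu> \<rho> \<pi> c \<sigma>1 \<sigma>2 xh" "feasible_rep R1 R2"
  shows "V0 \<mu> \<rho> \<pi> c xh E1 R1 E2 R2 \<le> V0 \<mu> \<rho> \<pi> c xh \<sigma>1 disclose1 (obey2 \<sigma>2) disclose2"
proof -
  have "\<forall>E1 R1 E2 R2. feasible_rep R1 R2 \<longrightarrow>
      V0 \<mu> \<rho> \<pi> c xh E1 R1 E2 R2 \<le> V0 \<mu> \<rho> \<pi> c xh \<sigma>1 disclose1 (obey2 \<sigma>2) disclose2"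
    using assms(1) unfolding IC_def Let_def by (elim conjE)
  with assms(2) show ?thesis by blast
qed

lemma IC_first_report:
  assumes "IC \<mu> \<rho> \<pi> c \<sigma>1 \<sigma>2 xh" "0 < reach1 \<mu> \<rho> \<pi> \<sigma>1 s1" "feasible_rep R1 R2"
  shows "V1 \<mu> \<rho> \<pi> c xh \<sigma>1 s1 R1 E2 R2 \<le> V1 \<mu> \<rho> \<pi> c xh \<sigma>1 s1 disclose1 (obey2 \<sigma>2) disclose2"
  using assms unfolding IC_def Let_def by blast

lemma IC_second_effort:
  assumes "IC \<mu> \<rho> \<pi> c \<sigma>1 \<sigma>2 xh" "0 < reach1 \<mu> \<rho> \<pi> \<sigma>1 s1" "feasible_rep disclose1 R2"
  shows "V2 \<mu> \<rho> \<pi> c xh \<sigma>1 s1 s1 E2 R2 \<le> V2 \<mu> \<rho> \<pi> c xh \<sigma>1 s1 s1 (obey2 \<sigma>2) disclose2"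
  using assms unfolding IC_def Let_def by blast

lemma IC_second_report:
  assumes "IC \<mu> \<rho> \<pi> c \<sigma>1 \<sigma>2 xh" "0 < natw \<mu> \<rho> \<pi> \<sigma>1 s1 (\<sigma>2 s1) s2" "xh s1 None"
  shows "xh s1 s2"
proof -
  have "agent_u c xh s1 None \<sigma>1 (\<sigma>2 s1) \<le> agent_u c xh s1 s2 \<sigma>1 (\<sigma>2 s1)"
    using assms(1,2) unfolding IC_def Let_def by blast
  with assms(3) show ?thesis by (cases "xh s1 s2") (auto simp: agent_u_def)
qed

lemma V0_le_obedient_no_first_test:
  assumes "0 \<le> \<mu>" "\<mu> \<le> 1" "0 \<le> \<rho>" "\<rho> \<le> 1" "0 \<le> \<pi>" "\<pi> \<le> 1"
    and disclosure_rewarded: "\<And>r1 s2. xh r1 None \<Longrightarrow> xh r1 s2"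
    and untested_deviation: "\<And>s1 r e. r = None \<or> r = s1 \<Longrightarrow>
      agent_value_at \<mu> \<rho> \<pi> c xh False s1 r e \<le> agent_value_at \<mu> \<rho> \<pi> c xh False s1 s1 (\<sigma>2 s1)"
    and tested_deviation: "\<And>r0 e0 r1 e1. r0 = None \<or> r0 = Some False \<Longrightarrow> r1 = None \<or> r1 = Some True \<Longrightarrow>
      agent_value_at \<mu> \<rho> \<pi> c xh True (Some False) r0 e0 + agent_value_at \<mu> \<rho> \<pi> c xh True (Some True) r1 e1
      \<le> V0 \<mu> \<rho> \<pi> c xh False disclose1 (obey2 \<sigma>2) disclose2"
    and feasible: "feasible_rep R1 R2"
  shows "V0 \<mu> \<rho> \<pi> c xh E1 R1 E2 R2 \<le> V0 \<mu> \<rho> \<pi> c xh False disclose1 (obey2 \<sigma>2) disclose2"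
proof -
  have V1_le: "V1 \<mu> \<rho> \<pi> c xh e1 s1 R1 E2 R2
      \<le> agent_value_at \<mu> \<rho> \<pi> c xh e1 s1 (R1 e1 s1) (E2 e1 s1 (R1 e1 s1))" for e1 s1
    using assms(1-7) feasible by (rule V1_le_agent_value_at)
  have R1: "R1 e s = None \<or> R1 e s = s" for e s
    using feasible by (simp add: feasible_rep_def)
  show ?thesis
  proof (cases E1)
    case True
    have "V1 \<mu> \<rho> \<pi> c xh True None R1 E2 R2 \<le> 0"
      using V1_le[of True None] by (simp add: agent_value_at_eq)
    with V1_le[of True "Some False"] V1_le[of True "Some True"]
      tested_deviation[OF R1[of True "Some False"] R1[of True "Some True"],
        of "E2 True (Some False) (R1 True (Some False))" "E2 True (Some True) (R1 True (Some True))"]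
    show ?thesis using True by (simp add: V0_eq)
  next
    case False
    have "V1 \<mu> \<rho> \<pi> c xh False s R1 E2 R2 \<le> V1 \<mu> \<rho> \<pi> c xh False s disclose1 (obey2 \<sigma>2) disclose2" for s
      using order_trans[OF V1_le[of False s] untested_deviation[OF R1]] by (simp add: V1_obedient)
    then show ?thesis using False by (simp add: V0_eq add_mono)
  qed
qed

lemma IC_no_first_testI:
  assumes "0 \<le> \<mu>" "\<mu> \<le> 1" "0 \<le> \<rho>" "\<rho> \<le> 1" "0 \<le> \<pi>" "\<pi> \<le> 1"
    and no_approval_on_empty_test: "\<And>r1. \<sigma>2 r1 \<Longrightarrow> \<not> xh r1 None"
    and disclosure_rewarded: "\<And>r1 s2. xh r1 None \<Longrightarrow> xh r1 s2"
    and untested_deviation: "\<And>s1 r e. r = None \<or> r = s1 \<Longrightarrow>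
      agent_value_at \<mu> \<rho> \<pi> c xh False s1 r e \<le> agent_value_at \<mu> \<rho> \<pi> c xh False s1 s1 (\<sigma>2 s1)"
    and tested_deviation: "\<And>r0 e0 r1 e1. r0 = None \<or> r0 = Some False \<Longrightarrow> r1 = None \<or> r1 = Some True \<Longrightarrow>
      agent_value_at \<mu> \<rho> \<pi> c xh True (Some False) r0 e0 + agent_value_at \<mu> \<rho> \<pi> c xh True (Some True) r1 e1
      \<le> V0 \<mu> \<rho> \<pi> c xh False disclose1 (obey2 \<sigma>2) disclose2"
  shows "IC \<mu> \<rho> \<pi> c False \<sigma>2 xh"
proof -
  have first_report: "V1 \<mu> \<rho> \<pi> c xh False s1 R1 E2 R2
      \<le> V1 \<mu> \<rho> \<pi> c xh False s1 disclose1 (obey2 \<sigma>2) disclose2"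
    if "feasible_rep R1 R2" for s1 R1 E2 R2
  proof -
    have "R1 False s1 = None \<or> R1 False s1 = s1"
      using that by (simp add: feasible_rep_def)
    then show ?thesis
      using order_trans[OF V1_le_agent_value_at[OF assms(1-6) disclosure_rewarded that] untested_deviation]
      by (simp add: V1_obedient)
  qed
  have second_effort: "V2 \<mu> \<rho> \<pi> c xh False s1 s1 E2 R2
      \<le> V2 \<mu> \<rho> \<pi> c xh False s1 s1 (obey2 \<sigma>2) disclose2"
    if "feasible_rep disclose1 R2" for s1 E2 R2
    using order_trans[OF V2_le_agent_value_at[OF assms(1-6) disclosure_rewarded that]
        untested_deviation[of s1 s1]]
    by (simp add: V2_disclose2)
  have second_report: "agent_u c xh s1 r2 False (\<sigma>2 s1) \<le> agent_u c xh s1 s2 False (\<sigma>2 s1)"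
    if "r2 = None \<or> r2 = s2" for s1 s2 r2
    using that disclosure_rewarded[of s1 s2] by (auto simp: agent_u_def)
  show ?thesis
    unfolding IC_def Let_def
    by (intro conjI allI impI no_approval_on_empty_test first_report second_effort second_report
        V0_le_obedient_no_first_test[OF assms(1-6) disclosure_rewarded untested_deviation tested_deviation])
qed

section \<open>The principal's payoff\<close>

lemma P_payoff_no_first_test:
  "P_payoff \<mu> \<rho> \<pi> k False \<sigma>2 xh =
     (1 - \<pi>) * principal_value2 (mu2_empty \<mu> \<rho>) \<pi> k (\<sigma>2 None) (xh None)
     + \<pi> * \<mu> * principal_value2 \<rho> \<pi> k (\<sigma>2 (Some True)) (xh (Some True))
     + \<pi> * (1 - \<mu>) * principal_value2 (1 - \<rho>) \<pi> k (\<sigma>2 (Some False)) (xh (Some False))"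
  unfolding P_payoff_def principal_value2_def prior_def obs_def mu2_empty_def
  by (cases "\<sigma>2 None"; cases "\<sigma>2 (Some True)"; cases "\<sigma>2 (Some False)";
      simp add: sum_UNIV_bool sum_UNIV_bool_option of_bool_not_iff algebra_simps)

lemma P_payoff_first_test:
  "P_payoff \<mu> \<rho> \<pi> k True \<sigma>2 xh =
     \<mu> * (principal_value2 \<rho> \<pi> k (\<sigma>2 (Some True)) (xh (Some True)) - k)
     + (1 - \<mu>) * (principal_value2 (1 - \<rho>) \<pi> k (\<sigma>2 (Some False)) (xh (Some False)) - k)"
  unfolding P_payoff_def principal_value2_def prior_def obs_def
  by (cases "\<sigma>2 None"; cases "\<sigma>2 (Some True)"; cases "\<sigma>2 (Some False)";
      simp add: sum_UNIV_bool sum_UNIV_bool_option of_bool_not_iff algebra_simps)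

lemma P_payoff_no_first_test_le:
  assumes "0 \<le> \<mu>" "\<mu> \<le> 1" "0 \<le> \<pi>" "\<pi> \<le> 1"
    and "principal_value2 (mu2_empty \<mu> \<rho>) \<pi> k (\<sigma>2 None) (xh None) \<le> a"
    and "principal_value2 \<rho> \<pi> k (\<sigma>2 (Some True)) (xh (Some True)) \<le> b"
    and "principal_value2 (1 - \<rho>) \<pi> k (\<sigma>2 (Some False)) (xh (Some False)) \<le> d"
  shows "P_payoff \<mu> \<rho> \<pi> k False \<sigma>2 xh \<le> (1 - \<pi>) * a + \<pi> * \<mu> * b + \<pi> * (1 - \<mu>) * d"
  unfolding P_payoff_no_first_test using assms by (intro add_mono mult_left_mono) auto

lemma principal_value2_le_test_value:
  assumes "0 \<le> p" "p \<le> 1" "0 \<le> \<pi>" "\<pi> \<le> 1" "k \<le> (1 - \<pi>) * p" "k \<le> (1 - \<pi>) * (1 - p)"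
  shows "principal_value2 p \<pi> k e x \<le> 1 - k"
proof -
  have "0 \<le> \<pi> * p" "\<pi> * p \<le> \<pi>" "\<pi> * p \<le> p"
    using assms by (auto simp: mult_left_le mult_left_le_one_le)
  moreover have "k \<le> p - \<pi> * p" "k \<le> 1 - p - \<pi> + \<pi> * p"
    using assms(5,6) by (simp_all add: algebra_simps)
  ultimately show ?thesis unfolding principal_value2_def
    by (cases e; cases "x None"; cases "x (Some True)"; cases "x (Some False)";
        simp add: algebra_simps; use assms(1-4) in linarith)
qed

lemma principal_value2_le_reject_default:
  assumes "0 \<le> p" "p \<le> 1/2" "0 \<le> \<pi>" "\<pi> \<le> 1" "(1 - \<pi>) * p \<le> k"
  shows "principal_value2 p \<pi> k e x \<le> \<pi> + (1 - \<pi>) * (1 - p)"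
proof -
  have "\<pi> * (2 * p) \<le> \<pi>" "\<pi> * (1 - 2 * p) \<le> 1 - 2 * p"
    using assms by (auto intro: mult_left_le mult_left_le_one_le)
  then have "2 * (\<pi> * p) \<le> \<pi>" "\<pi> - 2 * (\<pi> * p) \<le> 1 - 2 * p"
    by (simp_all add: algebra_simps)
  moreover have "0 \<le> \<pi> * p" "\<pi> * p \<le> \<pi>" "\<pi> * p \<le> p" "p - \<pi> * p \<le> k"
    using assms by (auto simp: mult_left_le mult_left_le_one_le algebra_simps)
  ultimately show ?thesis unfolding principal_value2_def
    by (cases e; cases "x None"; cases "x (Some True)"; cases "x (Some False)";
        simp add: algebra_simps; use assms(1-4) in linarith)
qed

lemma principal_value2_le_good_news:
  assumes "1/2 \<le> p" "p \<le> 1" "0 \<le> \<pi>" "\<pi> \<le> 1" "k \<le> p"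
    and "\<not> e \<Longrightarrow> \<not> x None \<Longrightarrow> \<not> x (Some True)"
    and "\<not> e \<Longrightarrow> x None \<Longrightarrow> x (Some False)"
  shows "principal_value2 p \<pi> k e x \<le> (if \<not> e \<and> x None then p else 1 - k)"
proof -
  have "\<pi> * 1 \<le> \<pi> * (2 * p)"
    using assms by (intro mult_left_mono) auto
  then have "0 \<le> \<pi> * p" "\<pi> * p \<le> \<pi>" "\<pi> * p \<le> p" "\<pi> \<le> 2 * (\<pi> * p)"
    using assms by (auto simp: mult_left_le mult_left_le_one_le algebra_simps)
  then show ?thesis using assms(6,7) unfolding principal_value2_def
    by (cases e; cases "x None"; cases "x (Some True)"; cases "x (Some False)";
        simp add: algebra_simps; use assms(1-5) in linarith)
qed

lemma principal_value2_le_belief: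
  assumes "1/2 \<le> p" "p \<le> 1" "0 \<le> \<pi>" "\<pi> \<le> 1" "0 \<le> k"
    and "e \<Longrightarrow> \<not> x None"
    and "\<not> e \<Longrightarrow> x None \<Longrightarrow> x (Some False)"
    and "\<not> (x (Some True) \<and> \<not> x (Some False) \<and> \<not> x None)"
  shows "principal_value2 p \<pi> k e x \<le> p"
proof -
  have "\<pi> * (2 * p - 1) \<le> 2 * p - 1"
    using assms by (auto intro: mult_left_le_one_le)
  then have "0 \<le> \<pi> * p" "\<pi> * p \<le> \<pi>" "\<pi> * p \<le> p" "2 * (\<pi> * p) - \<pi> \<le> 2 * p - 1"
    using assms by (auto simp: mult_left_le mult_left_le_one_le algebra_simps)
  then show ?thesis using assms(6-8) unfolding principal_value2_def
    by (cases e; cases "x None"; cases "x (Some True)"; cases "x (Some False)";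
        simp add: algebra_simps; use assms(1-5) in linarith)
qed

abbreviation mech_i_sigma2 :: "bool option \<Rightarrow> bool"
  where "mech_i_sigma2 \<equiv> \<lambda>r1. r1 = None"

abbreviation mech_i_xh :: "bool option \<Rightarrow> bool option \<Rightarrow> bool"
  where "mech_i_xh \<equiv> \<lambda>r1 r2. r1 = Some True \<or> (r1 \<noteq> Some True \<and> r2 = Some True)"

abbreviation mech_ii_sigma2 :: "bool option \<Rightarrow> bool"
  where "mech_ii_sigma2 \<equiv> \<lambda>r1. r1 \<noteq> Some False"

abbreviation mech_ii_xh :: "bool option \<Rightarrow> bool option \<Rightarrow> bool"
  where "mech_ii_xh \<equiv> \<lambda>r1 r2. r2 = Some True"

lemma P_payoff_mech_i:
  "P_payoff \<mu> \<rho> \<pi> k False mech_i_sigma2 mech_i_xh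
     = (1 - \<pi>) * (1 - k) + \<pi> * \<mu> * \<rho> + \<pi> * (1 - \<mu>) * (\<pi> + (1 - \<pi>) * \<rho>)"
  by (simp add: P_payoff_no_first_test principal_value2_def algebra_simps)

lemma P_payoff_mech_ii:
  "P_payoff \<mu> \<rho> \<pi> k False mech_ii_sigma2 mech_ii_xh
     = (1 - \<pi>) * (1 - k) + \<pi> * \<mu> * (1 - k) + \<pi> * (1 - \<mu>) * (\<pi> + (1 - \<pi>) * \<rho>)"
  by (simp add: P_payoff_no_first_test principal_value2_def algebra_simps)

section \<open>Optimal mechanisms\<close>

text \<open>The paper's bounds on \<open>\<kappa> = k / (1 - \<pi>)\<close> and \<open>\<gamma> = c / (1 - \<pi>)\<close>, multiplied by \<open>1 - \<pi>\<close>.\<close>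

locale testing_model =
  fixes \<mu> \<rho> \<pi> c k :: real
  assumes mu_pos: "0 < \<mu>" and mu_less_1: "\<mu> < 1"
    and rho_gt_half: "1/2 < \<rho>" and rho_less_1: "\<rho> < 1"
    and pi_pos: "0 < \<pi>" and pi_less_1: "\<pi> < 1"
    and k_gt: "(1 - \<rho>) * (1 - \<pi>) < k"
    and k_le: "k \<le> (1 - \<pi>) * mu2_empty \<mu> \<rho>" "k \<le> (1 - \<pi>) * (1 - mu2_empty \<mu> \<rho>)"
    and c_gt: "(1 - \<rho>) * (1 - \<pi>) < c"
    and c_le: "c \<le> (1 - \<pi>) * mu2_empty \<mu> \<rho>"
begin

text \<open>Under mechanism (i), testing already in period 1 raises the agent's probability of approval by
  \<open>first_test_benefit\<close> at an extra expected cost of \<open>\<pi> * c\<close>; \<open>first_test_benefit \<le> \<pi> * c\<close> is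
  the condition \<open>\<gamma>bar \<le> \<gamma>\<close>.\<close>

abbreviation first_test_benefit :: real
  where "first_test_benefit \<equiv> (1 - \<pi>) * (1 - \<rho>) * (\<mu> - (1 - \<mu>) * (1 - \<pi>))"

lemma params: "0 \<le> \<mu>" "\<mu> \<le> 1" "0 \<le> \<rho>" "\<rho> \<le> 1" "0 \<le> \<pi>" "\<pi> \<le> 1"
  using mu_pos mu_less_1 rho_gt_half rho_less_1 pi_pos pi_less_1 by auto

lemma costs_pos: "0 < c" "0 < k"
proof -
  have "0 < (1 - \<rho>) * (1 - \<pi>)"
    using rho_less_1 pi_less_1 by simp
  then show "0 < c" "0 < k"
    using c_gt k_gt by linarith+
qed

lemma mu2_empty_bounds: "0 < mu2_empty \<mu> \<rho>" "mu2_empty \<mu> \<rho> < \<rho>" "1 - mu2_empty \<mu> \<rho> < \<rho>"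
proof -
  have "0 < \<rho> * \<mu>" "0 \<le> (1 - \<rho>) * (1 - \<mu>)"
    using mu_pos mu_less_1 rho_gt_half rho_less_1 by simp_all
  then show "0 < mu2_empty \<mu> \<rho>"
    by (simp add: mu2_empty_def)
  have "0 < (1 - \<mu>) * (2 * \<rho> - 1)" "0 < \<mu> * (2 * \<rho> - 1)"
    using mu_pos mu_less_1 rho_gt_half by simp_all
  then show "mu2_empty \<mu> \<rho> < \<rho>" "1 - mu2_empty \<mu> \<rho> < \<rho>"
    by (simp_all add: mu2_empty_def algebra_simps)
qed

lemma c_less: "c < (1 - \<pi>) * \<rho>"
proof -
  have "(1 - \<pi>) * mu2_empty \<mu> \<rho> < (1 - \<pi>) * \<rho>"
    using mu2_empty_bounds(2) pi_less_1 by simp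
  with c_le show ?thesis by linarith
qed

lemma k_le_rho: "k \<le> \<rho>"
proof -
  have "(1 - \<pi>) * (1 - mu2_empty \<mu> \<rho>) \<le> 1 - mu2_empty \<mu> \<rho>"
    using mu2_empty_bounds pi_pos pi_less_1 rho_less_1 by (simp add: mult_left_le_one_le)
  with k_le(2) mu2_empty_bounds(3) show ?thesis by linarith
qed

lemma reach1_pos: "0 < reach1 \<mu> \<rho> \<pi> e1 (Some w)" "0 < reach1 \<mu> \<rho> \<pi> False None"
  using mu_pos mu_less_1 pi_pos pi_less_1
  by (cases e1; cases w; simp add: reach1_def prior_def obs_def sum_UNIV_bool algebra_simps)+

lemma natw_untested_pos:
  "0 < natw \<mu> \<rho> \<pi> e1 (Some True) False (Some w)" "0 < natw \<mu> \<rho> \<pi> False None False (Some w)"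
  using mu_pos mu_less_1 rho_gt_half rho_less_1 pi_pos pi_less_1
  by (cases e1; cases w; simp add: natw_def prior_def obs_def sum_UNIV_bool add_pos_pos)+

lemma test_optimal_after_empty:
  "agent_value2 (mu2_empty \<mu> \<rho>) \<pi> c e (\<lambda>r. r = Some True) \<le> mu2_empty \<mu> \<rho> - c"
  using c_le by (simp add: agent_value2_approve_good algebra_simps)

lemma test_optimal_after_good_news: "agent_value2 \<rho> \<pi> c e (\<lambda>r. r = Some True) \<le> \<rho> - c"
  using c_less by (simp add: agent_value2_approve_good algebra_simps)

lemma no_test_optimal_after_bad_news:
  "agent_value2 (1 - \<rho>) \<pi> c e (\<lambda>r. r = Some True) \<le> \<pi> * (1 - \<rho>)"
  using c_gt by (simp add: agent_value2_approve_good algebra_simps)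

text \<open>Otherwise testing would pay for the agent, as \<open>c < (1 - \<pi>) \<rho>\<close>.\<close>

lemma IC_untested_good_news_approval:
  assumes IC: "IC \<mu> \<rho> \<pi> c \<sigma>1 \<sigma>2 xh" and untested: "\<not> \<sigma>2 (Some True)"
    and approve: "xh (Some True) (Some True)"
  shows "xh (Some True) None"
proof (rule ccontr)
  assume reject: "\<not> xh (Some True) None"
  have "V2 \<mu> \<rho> \<pi> c xh \<sigma>1 (Some True) (Some True) (\<lambda>_ _ _. True) disclose2
      \<le> V2 \<mu> \<rho> \<pi> c xh \<sigma>1 (Some True) (Some True) (obey2 \<sigma>2) disclose2"
    by (rule IC_second_effort[OF IC reach1_pos(1)]) (simp add: feasible_rep_def)
  then have "agent_value2 \<rho> \<pi> c True (xh (Some True)) \<le> agent_value2 \<rho> \<pi> c False (xh (Some True))"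
    using untested mu_pos pi_pos by (cases \<sigma>1) (simp_all add: V2_disclose2 agent_value_at_eq)
  moreover have "0 \<le> (1 - \<pi>) * (1 - \<rho>)"
    using pi_less_1 rho_less_1 by simp
  ultimately show False
    using reject approve c_less unfolding agent_value2_def
    by (cases "xh (Some True) (Some False)"; simp add: algebra_simps; linarith)
qed

lemma IC_untested_good_news_disclosure:
  assumes IC: "IC \<mu> \<rho> \<pi> c \<sigma>1 \<sigma>2 xh" and untested: "\<not> \<sigma>2 (Some True)"
    and approve: "xh (Some True) None"
  shows "xh (Some True) s2"
proof (cases s2)
  case (Some w)
  with IC_second_report[OF IC _ approve] natw_untested_pos(1) untested show ?thesis by simp
qed (use approve in simp)

lemma IC_untested_empty_disclosure:
  assumes IC: "IC \<mu> \<rho> \<pi> c False \<sigma>2 xh" and untested: "\<not> \<sigma>2 None"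
    and approve: "xh None None"
  shows "xh None s2"
proof (cases s2)
  case (Some w)
  with IC_second_report[OF IC _ approve] natw_untested_pos(2) untested show ?thesis by simp
qed (use approve in simp)

text \<open>Without a recommended test the agent must not prefer to test, which forces
  \<open>c = (1 - \<pi>) \<mu>2(\<emptyset>)\<close>.\<close>

lemma IC_screening_after_empty_value:
  assumes IC: "IC \<mu> \<rho> \<pi> c False \<sigma>2 xh"
    and screen: "\<not> xh None None" "xh None (Some True)" "\<not> xh None (Some False)"
  shows "agent_value_at \<mu> \<rho> \<pi> c xh False None None (\<sigma>2 None) = (1 - \<pi>) * (mu2_empty \<mu> \<rho> - c)"
proof (cases "\<sigma>2 None")
  case True
  with screen show ?thesis by (simp add: agent_value_at_eq agent_value2_def)
next
  case False
  have "V2 \<mu> \<rho> \<pi> c xh False None None (\<lambda>_ _ _. True) disclose2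
      \<le> V2 \<mu> \<rho> \<pi> c xh False None None (obey2 \<sigma>2) disclose2"
    by (rule IC_second_effort[OF IC reach1_pos(2)]) (simp add: feasible_rep_def)
  then have "(1 - \<pi>) * (mu2_empty \<mu> \<rho> - c) \<le> (1 - \<pi>) * (\<pi> * mu2_empty \<mu> \<rho>)"
    using False screen by (simp add: V2_disclose2 agent_value_at_eq agent_value2_def)
  then have "mu2_empty \<mu> \<rho> - c \<le> \<pi> * mu2_empty \<mu> \<rho>"
    using pi_less_1 by (simp add: mult_le_cancel_left_pos)
  with c_le have "\<pi> * mu2_empty \<mu> \<rho> = mu2_empty \<mu> \<rho> - c"
    by (simp add: algebra_simps)
  with False screen show ?thesis
    by (simp add: agent_value_at_eq agent_value2_def)
qed

text \<open>Screening after an empty report while approving good news without a test exposes the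
  principal to the first-period test deviation that mechanism (i) must deter; concealing bad news
  shows that the agent's value \<open>A0\<close> after bad news is at least \<open>\<pi> (1 - \<rho>)\<close>.\<close>

lemma IC_screening_after_empty_first_test:
  assumes IC: "IC \<mu> \<rho> \<pi> c False \<sigma>2 xh"
    and untested: "\<not> \<sigma>2 (Some True)" and approve: "xh (Some True) None"
    and screen: "\<not> xh None None" "xh None (Some True)" "\<not> xh None (Some False)"
  shows "first_test_benefit \<le> \<pi> * c"
proof -
  define A0 where "A0 = agent_value2 (1 - \<rho>) \<pi> c (\<sigma>2 (Some False)) (xh (Some False))"
  have "V0 \<mu> \<rho> \<pi> c xh True disclose1 (obey2 \<sigma>2) disclose2
      \<le> V0 \<mu> \<rho> \<pi> c xh False disclose1 (obey2 \<sigma>2) disclose2"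
    by (rule IC_first_period[OF IC]) (simp add: feasible_rep_def)
  then have first_test: "(1 - \<mu>) * (A0 - c) + \<mu> * (1 - c)
      \<le> (1 - \<pi>) * (mu2_empty \<mu> \<rho> - c) + \<pi> * (1 - \<mu>) * A0 + \<pi> * \<mu>"
    using untested IC_untested_good_news_disclosure[OF IC untested approve]
      IC_screening_after_empty_value[OF IC screen]
    by (simp add: V0_eq V1_obedient agent_value_at_eq agent_value2_def A0_def algebra_simps)
  have "V1 \<mu> \<rho> \<pi> c xh False (Some False) (\<lambda>_ _. None) (\<lambda>_ _ _. False) disclose2
      \<le> V1 \<mu> \<rho> \<pi> c xh False (Some False) disclose1 (obey2 \<sigma>2) disclose2"
    by (rule IC_first_report[OF IC reach1_pos(1)]) (simp add: feasible_rep_def)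
  then have "(\<pi> * (1 - \<mu>)) * (\<pi> * (1 - \<rho>)) \<le> (\<pi> * (1 - \<mu>)) * A0"
    using screen by (simp add: V1_def V2_disclose2 V1_obedient agent_value_at_eq agent_value2_def A0_def)
  then have conceal: "\<pi> * (1 - \<rho>) \<le> A0"
    using pi_pos mu_less_1 by (simp add: mult_le_cancel_left_pos)
  have "(1 - \<pi>) * (1 - \<mu>) * (\<pi> * (1 - \<rho>)) \<le> (1 - \<pi>) * (1 - \<mu>) * A0"
    using conceal pi_less_1 mu_less_1 by (intro mult_left_mono) auto
  moreover have "(1 - \<pi>) * (1 - \<mu>) * A0 \<le> (1 - \<pi>) * (mu2_empty \<mu> \<rho> - \<mu>) + \<pi> * c"
    using first_test by (simp add: algebra_simps)
  moreover have "first_test_benefit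
      = (1 - \<pi>) * (1 - \<mu>) * (\<pi> * (1 - \<rho>)) - (1 - \<pi>) * (mu2_empty \<mu> \<rho> - \<mu>)"
    by (simp add: mu2_empty_def algebra_simps)
  ultimately show ?thesis by linarith
qed

lemma half_le_mu2_empty:
  assumes "\<pi> * c < first_test_benefit"
  shows "1/2 \<le> mu2_empty \<mu> \<rho>"
proof -
  have "(1 - \<pi>) * (1 - \<rho>) * \<pi> < first_test_benefit"
    using assms mult_strict_left_mono[OF c_gt pi_pos] by (simp add: mult_ac)
  then have "\<pi> < \<mu> - (1 - \<mu>) * (1 - \<pi>)"
    using pi_less_1 rho_less_1 by (simp add: mult_less_cancel_left_pos)
  then have "1 + \<pi> * \<mu> < 2 * \<mu>"
    by (simp add: algebra_simps)
  moreover have "0 \<le> \<pi> * \<mu>"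
    using pi_pos mu_pos by simp
  ultimately have "1/2 \<le> \<mu>"
    by linarith
  then have "0 \<le> (2 * \<rho> - 1) * (\<mu> - 1/2)"
    using rho_gt_half by simp
  then show ?thesis by (simp add: mu2_empty_def algebra_simps)
qed

lemma principal_value2_after_empty: "principal_value2 (mu2_empty \<mu> \<rho>) \<pi> k e x \<le> 1 - k"
  using mu2_empty_bounds params k_le by (intro principal_value2_le_test_value) auto

lemma principal_value2_after_bad_news: "principal_value2 (1 - \<rho>) \<pi> k e x \<le> \<pi> + (1 - \<pi>) * \<rho>"
  using principal_value2_le_reject_default[of "1 - \<rho>" \<pi> k] params rho_gt_half k_gt
  by (simp add: algebra_simps)

lemma IC_principal_value2_after_good_news:
  assumes "IC \<mu> \<rho> \<pi> c \<sigma>1 \<sigma>2 xh"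
  shows "principal_value2 \<rho> \<pi> k (\<sigma>2 (Some True)) (xh (Some True))
    \<le> (if \<not> \<sigma>2 (Some True) \<and> xh (Some True) None then \<rho> else 1 - k)"
proof (rule principal_value2_le_good_news)
  show "\<not> xh (Some True) (Some True)" if "\<not> \<sigma>2 (Some True)" "\<not> xh (Some True) None"
    using IC_untested_good_news_approval[OF assms] that by blast
  show "xh (Some True) (Some False)" if "\<not> \<sigma>2 (Some True)" "xh (Some True) None"
    using IC_untested_good_news_disclosure[OF assms that] .
qed (use params rho_gt_half k_le_rho in auto)

lemma P_payoff_no_first_test_le_IC:
  assumes "IC \<mu> \<rho> \<pi> c False \<sigma>2 xh"
  shows "P_payoff \<mu> \<rho> \<pi> k False \<sigma>2 xh
    \<le> (1 - \<pi>) * (1 - k) + \<pi> * \<mu> * (if \<not> \<sigma>2 (Some True) \<and> xh (Some True) None then \<rho> else 1 - k)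
      + \<pi> * (1 - \<mu>) * (\<pi> + (1 - \<pi>) * \<rho>)"
  using params principal_value2_after_empty IC_principal_value2_after_good_news[OF assms]
    principal_value2_after_bad_news
  by (intro P_payoff_no_first_test_le) auto

lemma P_payoff_le_unconditional_approval:
  assumes IC: "IC \<mu> \<rho> \<pi> c False \<sigma>2 xh"
    and untested: "\<not> \<sigma>2 (Some True)" and approve: "xh (Some True) None"
    and benefit: "\<pi> * c < first_test_benefit"
  shows "P_payoff \<mu> \<rho> \<pi> k False \<sigma>2 xh
    \<le> (1 - \<pi>) * mu2_empty \<mu> \<rho> + \<pi> * \<mu> * \<rho> + \<pi> * (1 - \<mu>) * (\<pi> + (1 - \<pi>) * \<rho>)"
proof -
  have "\<not> (xh None (Some True) \<and> \<not> xh None (Some False) \<and> \<not> xh None None)"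
    using IC_screening_after_empty_first_test[OF IC untested approve] benefit by auto
  then have "principal_value2 (mu2_empty \<mu> \<rho>) \<pi> k (\<sigma>2 None) (xh None) \<le> mu2_empty \<mu> \<rho>"
    using half_le_mu2_empty[OF benefit] mu2_empty_bounds params costs_pos
      IC_no_approval_on_empty_test[OF IC] IC_untested_empty_disclosure[OF IC]
    by (intro principal_value2_le_belief) auto
  moreover have "principal_value2 \<rho> \<pi> k (\<sigma>2 (Some True)) (xh (Some True)) \<le> \<rho>"
    using IC_principal_value2_after_good_news[OF IC] untested approve by simp
  ultimately show ?thesis
    using params principal_value2_after_bad_news by (intro P_payoff_no_first_test_le) auto
qed

lemma P_payoff_first_test_le_mech_ii:
  assumes IC: "IC \<mu> \<rho> \<pi> c True \<sigma>2 xh"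
  shows "P_payoff \<mu> \<rho> \<pi> k True \<sigma>2 xh \<le> P_payoff \<mu> \<rho> \<pi> k False mech_ii_sigma2 mech_ii_xh"
proof -
  let ?X = "\<pi> + (1 - \<pi>) * \<rho>"
  obtain M where M: "principal_value2 \<rho> \<pi> k (\<sigma>2 (Some True)) (xh (Some True)) \<le> M"
    and M_cases: "M = \<rho> \<or> M = 1 - k"
    using IC_principal_value2_after_good_news[OF IC] by auto
  have "P_payoff \<mu> \<rho> \<pi> k True \<sigma>2 xh \<le> \<mu> * (M - k) + (1 - \<mu>) * (?X - k)"
    unfolding P_payoff_first_test using M principal_value2_after_bad_news params
    by (intro add_mono mult_left_mono) auto
  also have "\<dots> \<le> (1 - \<pi>) * (1 - k) + \<pi> * \<mu> * (1 - k) + \<pi> * (1 - \<mu>) * ?X"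
    using M_cases
  proof
    assume "M = \<rho>"
    moreover have "(1 - \<pi>) * (1 - k) + \<pi> * \<mu> * (1 - k) + \<pi> * (1 - \<mu>) * ?X - (\<mu> * (\<rho> - k) + (1 - \<mu>) * (?X - k))
        = \<pi> * k * (1 - \<mu>) + \<mu> * (1 - \<rho>) + (1 - \<pi>) * (1 - \<pi>) * (1 - \<mu>) * (1 - \<rho>)"
      by (simp add: algebra_simps)
    moreover have "0 \<le> \<pi> * k * (1 - \<mu>)" "0 \<le> \<mu> * (1 - \<rho>)" "0 \<le> (1 - \<pi>) * (1 - \<pi>) * (1 - \<mu>) * (1 - \<rho>)"
      using params costs_pos by simp_all
    ultimately show ?thesis unfolding \<open>M = \<rho>\<close> by linarith
  next
    assume "M = 1 - k"
    moreover have "(1 - \<pi>) * (1 - k) + \<pi> * \<mu> * (1 - k) + \<pi> * (1 - \<mu>) * ?X - (\<mu> * (1 - k - k) + (1 - \<mu>) * (?X - k))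
        = k * (\<pi> + \<mu> * (1 - \<pi>)) + (1 - \<pi>) * (1 - \<pi>) * (1 - \<mu>) * (1 - \<rho>)"
      by (simp add: algebra_simps)
    moreover have "0 \<le> k * (\<pi> + \<mu> * (1 - \<pi>))" "0 \<le> (1 - \<pi>) * (1 - \<pi>) * (1 - \<mu>) * (1 - \<rho>)"
      using params costs_pos by simp_all
    ultimately show ?thesis unfolding \<open>M = 1 - k\<close> by linarith
  qed
  finally show ?thesis by (simp add: P_payoff_mech_ii)
qed

lemma P_payoff_le_mech_i:
  assumes IC: "IC \<mu> \<rho> \<pi> c \<sigma>1 \<sigma>2 xh" and "1 - \<rho> \<le> k"
  shows "P_payoff \<mu> \<rho> \<pi> k \<sigma>1 \<sigma>2 xh \<le> P_payoff \<mu> \<rho> \<pi> k False mech_i_sigma2 mech_i_xh"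
proof -
  have mech_ii_le_i: "\<pi> * \<mu> * (1 - k) \<le> \<pi> * \<mu> * \<rho>"
    using assms(2) params by (intro mult_left_mono) auto
  show ?thesis
  proof (cases \<sigma>1)
    case True
    with IC have "P_payoff \<mu> \<rho> \<pi> k \<sigma>1 \<sigma>2 xh \<le> P_payoff \<mu> \<rho> \<pi> k False mech_ii_sigma2 mech_ii_xh"
      using P_payoff_first_test_le_mech_ii by simp
    with mech_ii_le_i show ?thesis
      by (simp add: P_payoff_mech_i P_payoff_mech_ii)
  next
    case False
    have "\<pi> * \<mu> * (if \<not> \<sigma>2 (Some True) \<and> xh (Some True) None then \<rho> else 1 - k) \<le> \<pi> * \<mu> * \<rho>"
      using mech_ii_le_i by simp
    with P_payoff_no_first_test_le_IC[of \<sigma>2 xh] IC False show ?thesis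
      by (simp add: P_payoff_mech_i)
  qed
qed

lemma mech_ii_ge_unconditional_approval:
  "(1 - \<pi>) * mu2_empty \<mu> \<rho> + \<pi> * \<mu> * \<rho> + \<pi> * (1 - \<mu>) * (\<pi> + (1 - \<pi>) * \<rho>)
    \<le> P_payoff \<mu> \<rho> \<pi> k False mech_ii_sigma2 mech_ii_xh"
proof -
  have "(1 - \<pi>) * (\<pi> * (1 - mu2_empty \<mu> \<rho>)) \<le> (1 - \<pi>) * (1 - k - mu2_empty \<mu> \<rho>)"
    using k_le(2) params by (intro mult_left_mono) (auto simp: algebra_simps)
  moreover have "\<pi> * k \<le> \<pi> * ((1 - \<pi>) * (1 - mu2_empty \<mu> \<rho>))"
    using k_le(2) params by (intro mult_left_mono) auto
  moreover have "\<mu> * (\<rho> - 1) \<le> 0" "\<mu> * k \<le> k"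
    using params costs_pos by (auto intro: mult_nonneg_nonpos mult_left_le_one_le)
  then have "\<pi> * (\<mu> * (\<rho> - 1 + k)) \<le> \<pi> * k"
    using params by (intro mult_left_mono) (auto simp: algebra_simps)
  ultimately show ?thesis by (simp add: P_payoff_mech_ii algebra_simps)
qed

lemma P_payoff_le_mech_ii:
  assumes IC: "IC \<mu> \<rho> \<pi> c \<sigma>1 \<sigma>2 xh"
    and "k \<le> 1 - \<rho> \<or> \<pi> * c < first_test_benefit"
  shows "P_payoff \<mu> \<rho> \<pi> k \<sigma>1 \<sigma>2 xh \<le> P_payoff \<mu> \<rho> \<pi> k False mech_ii_sigma2 mech_ii_xh"
proof (cases \<sigma>1)
  case True
  with P_payoff_first_test_le_mech_ii IC show ?thesis by simp
next
  case False
  with IC have IC': "IC \<mu> \<rho> \<pi> c False \<sigma>2 xh" by simp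
  have "P_payoff \<mu> \<rho> \<pi> k False \<sigma>2 xh \<le> P_payoff \<mu> \<rho> \<pi> k False mech_ii_sigma2 mech_ii_xh"
  proof (cases "\<not> \<sigma>2 (Some True) \<and> xh (Some True) None \<and> 1 - k < \<rho>")
    case True
    with assms(2) have "\<pi> * c < first_test_benefit" by auto
    with P_payoff_le_unconditional_approval[OF IC'] True mech_ii_ge_unconditional_approval
    show ?thesis by fastforce
  next
    case False
    then have "\<pi> * \<mu> * (if \<not> \<sigma>2 (Some True) \<and> xh (Some True) None then \<rho> else 1 - k)
        \<le> \<pi> * \<mu> * (1 - k)"
      using params by (auto intro: mult_left_mono)
    with P_payoff_no_first_test_le_IC[OF IC'] show ?thesis
      by (simp add: P_payoff_mech_ii)
  qed
  with False show ?thesis by simp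
qed

lemma IC_mech_i:
  assumes benefit: "first_test_benefit \<le> \<pi> * c"
  shows "IC \<mu> \<rho> \<pi> c False mech_i_sigma2 mech_i_xh"
proof (rule IC_no_first_testI[OF params])
  show "agent_value_at \<mu> \<rho> \<pi> c mech_i_xh False s1 r e
      \<le> agent_value_at \<mu> \<rho> \<pi> c mech_i_xh False s1 s1 (mech_i_sigma2 s1)"
    if r: "r = None \<or> r = s1" for s1 r e
  proof -
    consider "s1 = None" "r = None" | "s1 = Some False" "r \<noteq> Some True" | "s1 = Some True"
      using r by (cases s1) auto
    then show ?thesis
    proof cases
      case 1
      then show ?thesis using mult_left_mono[OF test_optimal_after_empty, of "1 - \<pi>"] params
        by (simp add: agent_value_at_eq agent_value2_approve_good)
    next
      case 2
      then show ?thesis using mult_left_mono[OF no_test_optimal_after_bad_news, of "\<pi> * (1 - \<mu>)"] params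
        by (simp add: agent_value_at_eq agent_value2_approve_good)
    next
      case 3
      have "agent_value2 \<rho> \<pi> c e (mech_i_xh r) \<le> 1"
        using params costs_pos by (intro agent_value2_le_one) auto
      with 3 show ?thesis using mult_left_mono[of _ 1 "\<pi> * \<mu>"] params
        by (simp add: agent_value_at_eq agent_value2_def)
    qed
  qed
  show "agent_value_at \<mu> \<rho> \<pi> c mech_i_xh True (Some False) r0 e0
      + agent_value_at \<mu> \<rho> \<pi> c mech_i_xh True (Some True) r1 e1
      \<le> V0 \<mu> \<rho> \<pi> c mech_i_xh False disclose1 (obey2 mech_i_sigma2) disclose2"
    if "r0 = None \<or> r0 = Some False" for r0 e0 r1 e1
  proof -
    have "agent_value2 \<rho> \<pi> c e1 (mech_i_xh r1) \<le> 1"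
      using params costs_pos by (intro agent_value2_le_one) auto
    then have "agent_value_at \<mu> \<rho> \<pi> c mech_i_xh True (Some True) r1 e1 \<le> \<mu> * (1 - c)"
      using params by (simp add: agent_value_at_eq mult_left_mono)
    moreover have "agent_value_at \<mu> \<rho> \<pi> c mech_i_xh True (Some False) r0 e0
        \<le> (1 - \<mu>) * (\<pi> * (1 - \<rho>) - c)"
      using that no_test_optimal_after_bad_news[of e0] params
      by (auto simp: agent_value_at_eq intro: mult_left_mono)
    moreover have "V0 \<mu> \<rho> \<pi> c mech_i_xh False disclose1 (obey2 mech_i_sigma2) disclose2
        = (1 - \<pi>) * (mu2_empty \<mu> \<rho> - c) + \<pi> * (1 - \<mu>) * (\<pi> * (1 - \<rho>)) + \<pi> * \<mu>"
      by (simp add: V0_eq V1_obedient agent_value_at_eq agent_value2_def)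
    moreover have "(1 - \<pi>) * (mu2_empty \<mu> \<rho> - c) + \<pi> * (1 - \<mu>) * (\<pi> * (1 - \<rho>)) + \<pi> * \<mu>
        - ((1 - \<mu>) * (\<pi> * (1 - \<rho>) - c) + \<mu> * (1 - c))
        = \<pi> * c - first_test_benefit"
      by (simp add: mu2_empty_def algebra_simps)
    ultimately show ?thesis using benefit by linarith
  qed
qed auto

lemma IC_mech_ii: "IC \<mu> \<rho> \<pi> c False mech_ii_sigma2 mech_ii_xh"
proof (rule IC_no_first_testI[OF params])
  show "agent_value_at \<mu> \<rho> \<pi> c mech_ii_xh False s1 r e
      \<le> agent_value_at \<mu> \<rho> \<pi> c mech_ii_xh False s1 s1 (mech_ii_sigma2 s1)" for s1 r e
  proof (cases s1)
    case None
    then show ?thesis using mult_left_mono[OF test_optimal_after_empty, of "1 - \<pi>"] params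
      by (simp add: agent_value_at_eq agent_value2_approve_good)
  next
    case (Some b)
    then show ?thesis
      using mult_left_mono[OF no_test_optimal_after_bad_news, of "\<pi> * (1 - \<mu>)"]
        mult_left_mono[OF test_optimal_after_good_news, of "\<pi> * \<mu>"] params
      by (cases b) (simp_all add: agent_value_at_eq agent_value2_approve_good)
  qed
  show "agent_value_at \<mu> \<rho> \<pi> c mech_ii_xh True (Some False) r0 e0
      + agent_value_at \<mu> \<rho> \<pi> c mech_ii_xh True (Some True) r1 e1
      \<le> V0 \<mu> \<rho> \<pi> c mech_ii_xh False disclose1 (obey2 mech_ii_sigma2) disclose2" for r0 e0 r1 e1
  proof -
    have "agent_value_at \<mu> \<rho> \<pi> c mech_ii_xh True (Some False) r0 e0 \<le> (1 - \<mu>) * (\<pi> * (1 - \<rho>) - c)"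
      "agent_value_at \<mu> \<rho> \<pi> c mech_ii_xh True (Some True) r1 e1 \<le> \<mu> * (\<rho> - c - c)"
      using no_test_optimal_after_bad_news[of e0] test_optimal_after_good_news[of e1] params
      by (auto simp: agent_value_at_eq intro: mult_left_mono)
    moreover have "V0 \<mu> \<rho> \<pi> c mech_ii_xh False disclose1 (obey2 mech_ii_sigma2) disclose2
        = (1 - \<pi>) * (mu2_empty \<mu> \<rho> - c) + \<pi> * (1 - \<mu>) * (\<pi> * (1 - \<rho>)) + \<pi> * \<mu> * (\<rho> - c)"
      by (simp add: V0_eq V1_obedient agent_value_at_eq agent_value2_def)
    moreover have "(1 - \<pi>) * (mu2_empty \<mu> \<rho> - c) + \<pi> * (1 - \<mu>) * (\<pi> * (1 - \<rho>)) + \<pi> * \<mu> * (\<rho> - c)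
        - ((1 - \<mu>) * (\<pi> * (1 - \<rho>) - c) + \<mu> * (\<rho> - c - c))
        = (1 - \<pi>) * (1 - \<pi>) * (1 - \<rho>) * (1 - \<mu>) + c * (\<pi> + \<mu> * (1 - \<pi>))"
      by (simp add: mu2_empty_def algebra_simps)
    moreover have "0 \<le> (1 - \<pi>) * (1 - \<pi>) * (1 - \<rho>) * (1 - \<mu>)" "0 \<le> c * (\<pi> + \<mu> * (1 - \<pi>))"
      using params costs_pos by simp_all
    ultimately show ?thesis by linarith
  qed
qed auto

lemma optimal_mech_i:
  assumes "1 - \<rho> \<le> k" and "first_test_benefit \<le> \<pi> * c"
  shows "optimal_IC \<mu> \<rho> \<pi> c k False mech_i_sigma2 mech_i_xh"
  using IC_mech_i[OF assms(2)] P_payoff_le_mech_i[OF _ assms(1)] by (auto simp: optimal_IC_def)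

lemma optimal_mech_ii:
  assumes "k \<le> 1 - \<rho> \<or> \<pi> * c < first_test_benefit"
  shows "optimal_IC \<mu> \<rho> \<pi> c k False mech_ii_sigma2 mech_ii_xh"
  using IC_mech_ii P_payoff_le_mech_ii[OF _ assms] by (auto simp: optimal_IC_def)

end

theorem proposition4:
  fixes \<mu>0 \<rho> \<pi> c k :: real
  defines "\<kappa> \<equiv> k / (1 - \<pi>)"
      and "\<gamma> \<equiv> c / (1 - \<pi>)"
      and "\<mu>2e \<equiv> \<rho> * \<mu>0 + (1 - \<rho>) * (1 - \<mu>0)"
      and "\<kappa>bar \<equiv> (1 - \<rho>) / (1 - \<pi>)"
      and "\<gamma>bar \<equiv> (1 - \<rho>) * (\<mu>0 - (1 - \<mu>0) * (1 - \<pi>)) / \<pi>"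
  assumes "0 < \<mu>0" "\<mu>0 < 1"
      and "1/2 < \<rho>" "\<rho> < 1"
      and "0 < \<pi>" "\<pi> < 1"
      and "0 < c" "0 < k"
      and "1 - \<rho> < \<kappa>" "\<kappa> \<le> min \<mu>2e (1 - \<mu>2e)"
      and "1 - \<rho> < \<gamma>" "\<gamma> \<le> \<mu>2e"
  shows
    "(\<kappa> > \<kappa>bar \<and> \<gamma> \<ge> \<gamma>bar \<longrightarrow>
        optimal_IC \<mu>0 \<rho> \<pi> c k False (\<lambda>r1. r1 = None)
          (\<lambda>r1 r2. r1 = Some True \<or> (r1 \<noteq> Some True \<and> r2 = Some True))) \<and>
     ((1 - \<rho> < \<kappa> \<and> \<kappa> < \<kappa>bar) \<or> \<gamma> < \<gamma>bar \<longrightarrow>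
        optimal_IC \<mu>0 \<rho> \<pi> c k False (\<lambda>r1. r1 \<noteq> Some False)
          (\<lambda>r1 r2. r2 = Some True)) \<and>
     (\<kappa> = \<kappa>bar \<and> \<gamma> \<ge> \<gamma>bar \<longrightarrow>
        optimal_IC \<mu>0 \<rho> \<pi> c k False (\<lambda>r1. r1 = None)
          (\<lambda>r1 r2. r1 = Some True \<or> (r1 \<noteq> Some True \<and> r2 = Some True)) \<and>
        optimal_IC \<mu>0 \<rho> \<pi> c k False (\<lambda>r1. r1 \<noteq> Some False)
          (\<lambda>r1 r2. r2 = Some True))"
proof -
  have pi: "0 < 1 - \<pi>"
    using \<open>\<pi> < 1\<close> by simp
  have "\<mu>2e = mu2_empty \<mu>0 \<rho>"
    unfolding \<mu>2e_def mu2_empty_def ..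
  then interpret testing_model \<mu>0 \<rho> \<pi> c k
    using assms pi unfolding \<kappa>_def \<gamma>_def
    by unfold_locales (simp_all add: pos_less_divide_eq pos_divide_le_eq mult.commute)
  have kappa: "\<kappa>bar < \<kappa> \<longleftrightarrow> 1 - \<rho> < k" "\<kappa> < \<kappa>bar \<longleftrightarrow> k < 1 - \<rho>" "\<kappa> = \<kappa>bar \<longleftrightarrow> k = 1 - \<rho>"
    unfolding \<kappa>_def \<kappa>bar_def using pi by (simp_all add: divide_less_cancel)
  have gamma: "\<gamma>bar \<le> \<gamma> \<longleftrightarrow> (1 - \<pi>) * (1 - \<rho>) * (\<mu>0 - (1 - \<mu>0) * (1 - \<pi>)) \<le> \<pi> * c"
    unfolding \<gamma>bar_def \<gamma>_def using pi \<open>0 < \<pi>\<close> by (simp add: field_simps)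
  show ?thesis
    using kappa gamma optimal_mech_i optimal_mech_ii by (auto simp: not_le[symmetric])
qed

end
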